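(* Let $x_1\ge x_2\ge\dots\ge x_n$ be positive integers with $\sum_{i=1}^n x_i=2n-2$. Let $p,q$ be positive integers with $p\ge q>1$ and $p+q=n+1$. Then there exist sequences of positive integers $a_1,\dots,a_p$ and $b_1,\dots,b_q$ with $\sum_{i=1}^p a_i=2p-2$ and $\sum_{i=1}^q b_i=2q-2$, such that $a_1+b_1=x_1$ and the multiset $\{a_2,\dots,a_p,b_2,\dots,b_q\}$ equals the multiset $\{x_2,\dots,x_n\}$. *)

theory Defs
  imports Main "HOL-Library.Multiset"
begin

end

theory Submission
  imports Defs
begin

text \<open>Give \<open>b\<close> a window \<open>x\<^sub>m\<^sub>+\<^sub>2, \<dots>, x\<^sub>m\<^sub>+\<^sub>q\<close> of \<open>q - 1\<close> consecutive entries and \<open>a\<close> the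
  remaining ones, then fix \<open>a\<^sub>1\<close> and \<open>b\<^sub>1\<close> so that both sums come out right. Both heads are
  positive iff the window sum \<open>W m\<close> satisfies \<open>2q - 1 - x\<^sub>1 \<le> W m \<le> 2q - 3\<close>. Sliding the window
  one step drops an entry \<open>\<le> x\<^sub>1\<close> and adds a positive one, so \<open>W\<close> decreases by at most
  \<open>x\<^sub>1 - 1\<close> per step. Since \<open>x\<^sub>2, \<dots>, x\<^sub>n\<close> is nonincreasing with sum \<open>2n - 2 - x\<^sub>1 < 2(n - 1)\<close>,
  none of its final segments averages \<open>2\<close> or more; applied to the segments after the first and
  after the last window this gives the two bounds at the ends, and a discrete intermediate value
  argument finds a good window in between.\<close>

lemma sum_ge_of_tail_sum_ge:
  fixes x :: "nat \<Rightarrow> nat" and c :: nat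
  assumes antimono: "\<And>i j. l \<le> i \<Longrightarrow> i \<le> j \<Longrightarrow> j \<le> n \<Longrightarrow> x j \<le> x i"
    and lr: "l \<le> r + 1" and rn: "r < n"
    and tail: "c * (n - r) \<le> (\<Sum>i=r+1..n. x i)"
  shows "c * (n + 1 - l) \<le> (\<Sum>i=l..n. x i)"
proof -
  have "c \<le> x (r + 1)"
  proof (rule ccontr)
    assume small: "\<not> c \<le> x (r + 1)"
    have "(\<Sum>i=r+1..n. x i) \<le> (\<Sum>i=r+1..n. x (r + 1))"
      using lr by (intro sum_mono antimono) auto
    also have "\<dots> = (n - r) * x (r + 1)" by simp
    also have "\<dots> < c * (n - r)" using small rn by simp
    finally show False using tail by simp
  qed
  then have "c \<le> x i" if "i \<in> {l..r}" for i
    using that antimono[of i "r + 1"] rn by auto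
  then have head: "c * (r + 1 - l) \<le> (\<Sum>i=l..r. x i)"
    using sum_mono[of "{l..r}" "\<lambda>_. c" x] by (simp add: mult.commute)
  have "(\<Sum>i=l..n. x i) = (\<Sum>i=l..r. x i) + (\<Sum>i=r+1..n. x i)"
    using sum.ub_add_nat[of l r x "n - r"] lr rn by simp
  moreover have "c * (n + 1 - l) = c * (r + 1 - l) + c * (n - r)"
    using lr rn by (simp flip: add_mult_distrib2)
  ultimately show ?thesis
    using head tail by linarith
qed

lemma exists_crossing_of_bounded_decrease:
  fixes f :: "nat \<Rightarrow> nat"
  assumes end_below: "f N \<le> c" and start_above: "c < f 0 + d"
    and step: "\<And>m. m < N \<Longrightarrow> f m \<le> f (Suc m) + d"
  shows "\<exists>m\<le>N. f m \<le> c \<and> c < f m + d"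
proof -
  define m where "m = (LEAST m. f m \<le> c)"
  have "f m \<le> c" and "m \<le> N"
    unfolding m_def using end_below by (auto intro: LeastI Least_le)
  moreover have "c < f m + d"
  proof (cases m)
    case 0
    then show ?thesis using start_above by simp
  next
    case (Suc k)
    then have "c < f k" unfolding m_def by (metis lessI not_less not_less_Least)
    also have "f k \<le> f m + d" using step \<open>m \<le> N\<close> Suc by simp
    finally show ?thesis .
  qed
  ultimately show ?thesis by blast
qed

lemma mset_set_atLeastAtMost_split:
  fixes l r u :: nat
  assumes "l \<le> r + 1" "r \<le> u"
  shows "mset_set {l..u} = mset_set {l..r} + mset_set {r+1..u}"
proof -
  have "{l..u} = {l..r} \<union> {r+1..u}" using assms by auto
  then show ?thesis by (simp add: mset_set_Union)
qed

lemma image_mset_shift_mset_set_atLeastAtMost: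
  fixes k u v :: nat
  shows "image_mset (\<lambda>i. f (i + k)) (mset_set {u..v}) = image_mset f (mset_set {u+k..v+k})"
proof -
  have "inj_on (\<lambda>i. i + k) {u..v}" by (simp add: inj_on_def)
  then have "image_mset (\<lambda>i. i + k) (mset_set {u..v}) = mset_set {u+k..v+k}"
    by (simp add: image_mset_mset_set)
  moreover have "image_mset (\<lambda>i. f (i + k)) (mset_set {u..v})
      = image_mset f (image_mset (\<lambda>i. i + k) (mset_set {u..v}))"
    by (simp add: multiset.map_comp comp_def)
  ultimately show ?thesis by simp
qed

lemma image_mset_window_split:
  fixes x :: "nat \<Rightarrow> 'a"
  assumes "m + 1 \<le> p" "p + q = n + 1" "1 \<le> q"
  shows "image_mset (\<lambda>i. if i \<le> m + 1 then x i else x (i + (q - 1))) (mset_set {2..p})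
           + image_mset (\<lambda>i. x (i + m)) (mset_set {2..q})
         = image_mset x (mset_set {2..n})"
proof -
  let ?a = "\<lambda>i. if i \<le> m + 1 then x i else x (i + (q - 1))"
  have "image_mset ?a (mset_set {2..p})
        = image_mset ?a (mset_set {2..m+1}) + image_mset ?a (mset_set {m+2..p})"
    using assms mset_set_atLeastAtMost_split[of 2 "m+1" p] by simp
  also have "image_mset ?a (mset_set {2..m+1}) = image_mset x (mset_set {2..m+1})"
    by (rule image_mset_cong) simp
  also have "image_mset ?a (mset_set {m+2..p}) = image_mset (\<lambda>i. x (i + (q - 1))) (mset_set {m+2..p})"
    by (rule image_mset_cong) simp
  also have "\<dots> = image_mset x (mset_set {m+2+(q-1)..p+(q-1)})"
    by (rule image_mset_shift_mset_set_atLeastAtMost)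
  also have "{m+2+(q-1)..p+(q-1)} = {m+q+1..n}"
    using assms by auto
  finally have left: "image_mset ?a (mset_set {2..p})
      = image_mset x (mset_set {2..m+1}) + image_mset x (mset_set {m+q+1..n})" .
  have window: "image_mset (\<lambda>i. x (i + m)) (mset_set {2..q}) = image_mset x (mset_set {m+2..m+q})"
    by (simp add: image_mset_shift_mset_set_atLeastAtMost add.commute)
  have whole: "mset_set {2..n} = mset_set {2..m+1} + mset_set {m+2..m+q} + mset_set {m+q+1..n}"
    using assms mset_set_atLeastAtMost_split[of 2 "m+1" n]
      mset_set_atLeastAtMost_split[of "m+2" "m+q" n] by (simp add: add.assoc)
  show ?thesis unfolding left window whole image_mset_union
    by (simp only: add.assoc add.commute[of "image_mset x (mset_set {m+2..m+q})"])
qed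

lemma window_sum_Suc:
  fixes x :: "nat \<Rightarrow> 'a::comm_monoid_add"
  assumes "2 \<le> q"
  shows "(\<Sum>i=2..q. x (i + Suc m)) + x (m + 2) = (\<Sum>i=2..q. x (i + m)) + x (m + q + 1)"
  using sum.Suc_reindex_ivl[OF assms, of "\<lambda>i. x (i + m)"]
  by (simp add: add.commute add.left_commute)

lemma exists_balanced_window:
  fixes x :: "nat \<Rightarrow> nat"
  assumes pos: "\<forall>i\<in>{1..n}. x i > 0"
    and antimono: "\<forall>i j. 1 \<le> i \<and> i \<le> j \<and> j \<le> n \<longrightarrow> x j \<le> x i"
    and total: "(\<Sum>i=1..n. x i) = 2 * n - 2"
    and pq: "p + q = n + 1" "2 \<le> p" "2 \<le> q"
  obtains m where "m + 1 \<le> p"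
    and "(\<Sum>i=2..q. x (i + m)) + 3 \<le> 2 * q"
    and "2 * q \<le> (\<Sum>i=2..q. x (i + m)) + x 1 + 1"
proof -
  define W where "W m = (\<Sum>i=2..q. x (i + m))" for m
  have x1: "x 1 > 0" using pos pq by auto
  have rest: "x 1 + (\<Sum>i=2..n. x i) = 2 * n - 2"
    using total pq sum.atLeast_Suc_atMost[of 1 n x] by (simp add: numeral_2_eq_2)
  have light_tail: "(\<Sum>i=r+1..n. x i) < 2 * (n - r)" if "1 \<le> r" "r < n" for r
  proof (rule ccontr)
    assume "\<not> ?thesis"
    then have "2 * (n + 1 - 2) \<le> (\<Sum>i=2..n. x i)"
      using that antimono by (intro sum_ge_of_tail_sum_ge[where r = r]) auto
    then show False using rest x1 by linarith
  qed
  have "W (p - 1) = (\<Sum>i=2+(p-1)..q+(p-1). x i)"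
    unfolding W_def by (rule sum.shift_bounds_cl_nat_ivl[symmetric])
  also have "{2+(p-1)..q+(p-1)} = {p+1..n}"
    using pq by auto
  finally have end_below: "W (p - 1) \<le> 2 * q - 3"
    using light_tail[of p] pq by simp
  have "(\<Sum>i=2..n. x i) = W 0 + (\<Sum>i=q+1..n. x i)"
    unfolding W_def using pq sum.ub_add_nat[of 2 q x "n - q"] by simp
  then have start_above: "2 * q - 3 < W 0 + (x 1 - 1)"
    using light_tail[of q] pq rest x1 by simp
  have step: "W m \<le> W (Suc m) + (x 1 - 1)" if "m < p - 1" for m
  proof -
    have "x (m + 2) \<le> x 1" "0 < x (m + q + 1)"
      using that pq antimono pos by auto
    then show ?thesis
      using window_sum_Suc[OF pq(3), of x m] unfolding W_def by linarith
  qed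
  obtain m where "m \<le> p - 1" "W m \<le> 2 * q - 3" "2 * q - 3 < W m + (x 1 - 1)"
    using exists_crossing_of_bounded_decrease[of W "p - 1", OF end_below start_above step] by blast
  then show ?thesis
    using that[of m] pq x1 unfolding W_def by linarith
qed

lemma split_at_balanced_window:
  fixes x :: "nat \<Rightarrow> nat"
  assumes pos: "\<forall>i\<in>{1..n}. x i > 0"
    and total: "(\<Sum>i=1..n. x i) = 2 * n - 2"
    and pq: "p + q = n + 1" and m: "m + 1 \<le> p"
    and light: "(\<Sum>i=2..q. x (i + m)) + 3 \<le> 2 * q"
    and heavy: "2 * q \<le> (\<Sum>i=2..q. x (i + m)) + x 1 + 1"
  shows "\<exists>a b :: nat \<Rightarrow> nat.
           (\<forall>i\<in>{1..p}. a i > 0) \<and> (\<forall>i\<in>{1..q}. b i > 0) \<and>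
           (\<Sum>i=1..p. a i) = 2 * p - 2 \<and> (\<Sum>i=1..q. b i) = 2 * q - 2 \<and>
           a 1 + b 1 = x 1 \<and>
           image_mset a (mset_set {2..p}) + image_mset b (mset_set {2..q})
             = image_mset x (mset_set {2..n})"
proof -
  define A where "A i = (if i \<le> m + 1 then x i else x (i + (q - 1)))" for i
  define B where "B i = x (i + m)" for i
  define a where "a = A(1 := 2 * p - 2 - (\<Sum>i=2..p. A i))"
  define b where "b = B(1 := 2 * q - 2 - (\<Sum>i=2..q. B i))"
  have q: "2 \<le> q" using light by linarith
  have split: "image_mset A (mset_set {2..p}) + image_mset B (mset_set {2..q})
      = image_mset x (mset_set {2..n})"
    unfolding A_def B_def using m pq q by (intro image_mset_window_split) auto
  have a_tail: "image_mset a (mset_set {2..p}) = image_mset A (mset_set {2..p})"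
    and b_tail: "image_mset b (mset_set {2..q}) = image_mset B (mset_set {2..q})"
    unfolding a_def b_def by (auto intro: image_mset_cong)
  have "(\<Sum>i=2..p. A i) + (\<Sum>i=2..q. B i) = (\<Sum>i=2..n. x i)"
    using arg_cong[OF split, of sum_mset] by (simp add: sum_unfold_sum_mset)
  moreover have "x 1 + (\<Sum>i=2..n. x i) = 2 * n - 2"
    using total pq q sum.atLeast_Suc_atMost[of 1 n x] by (simp add: numeral_2_eq_2)
  ultimately have A_sum: "(\<Sum>i=2..p. A i) + 3 \<le> 2 * p"
    and heads: "a 1 + b 1 = x 1"
    using pq light heavy unfolding a_def b_def B_def by auto
  have tail_pos: "0 < v" if "v \<in># image_mset x (mset_set {2..n})" for v
    using that pos by auto
  show ?thesis
  proof (intro exI conjI ballI)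
    fix i assume "i \<in> {1..p}"
    then show "0 < a i"
      using A_sum tail_pos[of "a i"] unfolding a_tail split[symmetric]
      by (cases "i = 1") (auto simp: a_def)
  next
    fix i assume "i \<in> {1..q}"
    then show "0 < b i"
      using light tail_pos[of "b i"] unfolding b_tail split[symmetric]
      by (cases "i = 1") (auto simp: b_def B_def)
  next
    show "(\<Sum>i=1..p. a i) = 2 * p - 2"
      using A_sum m sum.atLeast_Suc_atMost[of 1 p a] unfolding a_def
      by (simp add: numeral_2_eq_2)
    show "(\<Sum>i=1..q. b i) = 2 * q - 2"
      using light q sum.atLeast_Suc_atMost[of 1 q b] unfolding b_def B_def
      by (simp add: numeral_2_eq_2)
  qed (use heads split a_tail b_tail in simp_all)
qed

theorem lemma2:
  fixes x :: "nat \<Rightarrow> nat" and n p q :: nat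
  assumes "\<forall>i\<in>{1..n}. x i > 0"
    and "\<forall>i j. 1 \<le> i \<and> i \<le> j \<and> j \<le> n \<longrightarrow> x j \<le> x i"
    and "(\<Sum>i=1..n. x i) = 2 * n - 2"
    and "p \<ge> q" and "q > 1" and "p + q = n + 1"
  shows "\<exists>a b :: nat \<Rightarrow> nat.
           (\<forall>i\<in>{1..p}. a i > 0) \<and> (\<forall>i\<in>{1..q}. b i > 0) \<and>
           (\<Sum>i=1..p. a i) = 2 * p - 2 \<and> (\<Sum>i=1..q. b i) = 2 * q - 2 \<and>
           a 1 + b 1 = x 1 \<and>
           image_mset a (mset_set {2..p}) + image_mset b (mset_set {2..q})
             = image_mset x (mset_set {2..n})"
proof -
  \<comment> \<open>\<open>p \<ge> q\<close> only serves to give \<open>p \<ge> 2\<close>; the construction is symmetric in \<open>p\<close> and \<open>q\<close>.\<close>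
  have "2 \<le> p" "2 \<le> q" using assms(4,5) by linarith+
  then obtain m where "m + 1 \<le> p"
      "(\<Sum>i=2..q. x (i + m)) + 3 \<le> 2 * q" "2 * q \<le> (\<Sum>i=2..q. x (i + m)) + x 1 + 1"
    using exists_balanced_window[OF assms(1-3,6)] by blast
  then show ?thesis
    using split_at_balanced_window[OF assms(1,3,6)] by blast
qed

end
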